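(* Let $G$ be a finite group with $Z(G)=I$, and suppose there is an integer $n_0\ge 3$ such that $l^i(D_1,\dots,D_n)\ge1$ for all class vectors $(D_1,\dots,D_n)$ of $G$ of length $n\in\{n_0,n_0+1,\dots,2n_0-1\}$. Then the set of class vectors $(C_1,\dots,C_m)$ of $G$ (of any length $m$) with $l^i(C_1,\dots,C_m)=0$ is finite, and $\lim_{m\to\infty}l^i(C_1,\dots,C_m)=\infty$, i.e. for every sequence of class vectors of $G$ whose lengths $m$ tend to infinity, the values $l^i(C_1,\dots,C_m)$ tend to infinity.
   Context: $I$ is the trivial group and $\iota$ the identity. A class vector of length $k$ is a tuple of $k$ non-trivial conjugacy classes of $G$. $\Sigma^i(C_1,\dots,C_k)$ is the set of $G$-conjugacy classes (simultaneous conjugation) of tuples $(\sigma_1,\dots,\sigma_k)$ with $\sigma_j\in C_j$, $\langle\sigma_1,\dots,\sigma_k\rangle=G$, $\sigma_1\cdots\sigma_k=\iota$, and $l^i(C_1,\dots,C_k)=|\Sigma^i(C_1,\dots,C_k)|$. *)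

theory Defs
  imports "HOL-Algebra.Group_Action" "HOL-Algebra.Generated_Groups"
begin

definition center :: "('a, 'b) monoid_scheme \<Rightarrow> 'a set" where
  "center G = {z \<in> carrier G. \<forall>g \<in> carrier G. z \<otimes>\<^bsub>G\<^esub> g = g \<otimes>\<^bsub>G\<^esub> z}"

definition conj_act :: "('a, 'b) monoid_scheme \<Rightarrow> 'a \<Rightarrow> 'a \<Rightarrow> 'a" where
  "conj_act G g x = g \<otimes>\<^bsub>G\<^esub> x \<otimes>\<^bsub>G\<^esub> inv\<^bsub>G\<^esub> g"

definition conj_classes :: "('a, 'b) monoid_scheme \<Rightarrow> 'a set set" where
  "conj_classes G = orbits G (carrier G) (conj_act G)"

definition nontriv_classes :: "('a, 'b) monoid_scheme \<Rightarrow> 'a set set" where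
  "nontriv_classes G = conj_classes G - {{\<one>\<^bsub>G\<^esub>}}"

definition class_vector :: "('a, 'b) monoid_scheme \<Rightarrow> 'a set list \<Rightarrow> bool" where
  "class_vector G Cs \<longleftrightarrow> set Cs \<subseteq> nontriv_classes G"

definition list_prod :: "('a, 'b) monoid_scheme \<Rightarrow> 'a list \<Rightarrow> 'a" where
  "list_prod G xs = foldr (\<lambda>x y. x \<otimes>\<^bsub>G\<^esub> y) xs \<one>\<^bsub>G\<^esub>"

definition gen_tuples :: "('a, 'b) monoid_scheme \<Rightarrow> 'a set list \<Rightarrow> 'a list set" where
  "gen_tuples G Cs = {xs. length xs = length Cs \<and> (\<forall>j < length Cs. xs ! j \<in> Cs ! j)
      \<and> generate G (set xs) = carrier G \<and> list_prod G xs = \<one>\<^bsub>G\<^esub>}"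

definition sim_conj :: "('a, 'b) monoid_scheme \<Rightarrow> 'a \<Rightarrow> 'a list \<Rightarrow> 'a list" where
  "sim_conj G g xs = map (conj_act G g) xs"

definition Sigma_i :: "('a, 'b) monoid_scheme \<Rightarrow> 'a set list \<Rightarrow> 'a list set set" where
  "Sigma_i G Cs = orbits G (gen_tuples G Cs) (sim_conj G)"

definition l_i :: "('a, 'b) monoid_scheme \<Rightarrow> 'a set list \<Rightarrow> nat" where
  "l_i G Cs = card (Sigma_i G Cs)"

end

theory Submission
  imports Defs
begin

text \<open>
  Since the centre is trivial, simultaneous conjugation acts freely on generating tuples: an element
  fixing a generating tuple commutes with all of G. Hence the number of generating tuples with
  product one is l_i times the order of G. If a is such a tuple for a class vector A, then the
  tuples (a conjugated by g) @ ys, with ys such a tuple for B, are pairwise distinct, which gives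
  l_i (A @ B) \<ge> |G| * l_i B. Splitting off blocks of n0 classes until the length lies in
  [n0, 2 n0 - 1] yields l_i C \<ge> |G| ^ ((m - n0) div n0) for class vectors of length m \<ge> n0,
  which is positive and, as |G| \<ge> 2, tends to infinity with m.
\<close>

text \<open>The library's actions take values in BijGroup E, whose elements are extensional on E;
  hence the restriction.\<close>

lemma (in group) group_action_restrict:
  assumes closed: "\<And>g x. g \<in> carrier G \<Longrightarrow> x \<in> E \<Longrightarrow> act g x \<in> E"
    and one: "\<And>x. x \<in> E \<Longrightarrow> act \<one> x = x"
    and comp: "\<And>g h x. g \<in> carrier G \<Longrightarrow> h \<in> carrier G \<Longrightarrow> x \<in> E \<Longrightarrow>
      act g (act h x) = act (g \<otimes> h) x"
  shows "group_action G E (\<lambda>g. restrict (act g) E)"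
proof -
  have Bij: "restrict (act g) E \<in> Bij E" if g: "g \<in> carrier G" for g
  proof -
    have "bij_betw (act g) E E"
      by (rule bij_betw_byWitness[where f' = "act (inv g)"]) (use g closed one comp in auto)
    then show ?thesis by (simp add: Bij_def)
  qed
  have mult: "restrict (act (g \<otimes> h)) E = compose E (restrict (act g) E) (restrict (act h) E)"
    if "g \<in> carrier G" "h \<in> carrier G" for g h
    using that closed comp by (auto simp: compose_def)
  show ?thesis
    unfolding group_action_def group_hom_def group_hom_axioms_def
    using is_group group_BijGroup Bij mult by (auto simp: hom_def BijGroup_def)
qed

lemma orbits_restrict: "orbits G E (\<lambda>g. restrict (act g) E) = orbits G E act"
  unfolding orbits_def orbit_def by auto

lemma (in group) card_eq_card_orbits_mult_order:
  assumes closed: "\<And>g x. g \<in> carrier G \<Longrightarrow> x \<in> E \<Longrightarrow> act g x \<in> E"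
    and one: "\<And>x. x \<in> E \<Longrightarrow> act \<one> x = x"
    and comp: "\<And>g h x. g \<in> carrier G \<Longrightarrow> h \<in> carrier G \<Longrightarrow> x \<in> E \<Longrightarrow>
      act g (act h x) = act (g \<otimes> h) x"
    and free: "\<And>x. x \<in> E \<Longrightarrow> inj_on (\<lambda>g. act g x) (carrier G)"
    and fin: "finite E"
  shows "card E = card (orbits G E act) * order G"
proof -
  interpret group_action G E "\<lambda>g. restrict (act g) E"
    using group_action_restrict[OF closed one comp] .
  have card_orbit: "card orb = order G" if "orb \<in> orbits G E act" for orb
  proof -
    obtain x where x: "x \<in> E" and orb: "orb = (\<lambda>g. act g x) ` carrier G"
      using \<open>orb \<in> orbits G E act\<close> unfolding orbits_def orbit_def by blast
    show ?thesis using card_image[OF free[OF x]] by (simp add: orb order_def)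
  qed
  have "(\<Sum>orb\<in>orbits G E act. \<Sum>x\<in>orb. 1) = (\<Sum>x\<in>E. 1::nat)"
    using disjoint_sum[OF fin] by (simp only: orbits_restrict)
  then have "card E = (\<Sum>orb\<in>orbits G E act. card orb)"
    by simp
  also have "\<dots> = card (orbits G E act) * order G"
    using card_orbit by simp
  finally show ?thesis .
qed

lemma (in monoid) list_prod_closed [intro, simp]:
  "set xs \<subseteq> carrier G \<Longrightarrow> list_prod G xs \<in> carrier G"
  by (induction xs) (auto simp: list_prod_def)

lemma (in group_hom) hom_list_prod:
  "set xs \<subseteq> carrier G \<Longrightarrow> h (list_prod G xs) = list_prod H (map h xs)"
proof (induction xs)
  case (Cons x xs)
  then have "list_prod G xs \<in> carrier G"
    by simp
  with Cons show ?case
    by (simp add: list_prod_def)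
qed (simp add: list_prod_def)

context group
begin

lemma conj_act_closed [intro, simp]:
  "g \<in> carrier G \<Longrightarrow> x \<in> carrier G \<Longrightarrow> conj_act G g x \<in> carrier G"
  by (simp add: conj_act_def)

lemma conj_act_one [simp]: "x \<in> carrier G \<Longrightarrow> conj_act G \<one> x = x"
  by (simp add: conj_act_def)

lemma conj_act_comp:
  "g \<in> carrier G \<Longrightarrow> h \<in> carrier G \<Longrightarrow> x \<in> carrier G \<Longrightarrow>
   conj_act G g (conj_act G h x) = conj_act G (g \<otimes> h) x"
  by (simp add: conj_act_def m_assoc inv_mult_group)

lemma conj_act_hom: "g \<in> carrier G \<Longrightarrow> conj_act G g \<in> hom G G"
  by (rule homI) (simp_all add: conj_act_def m_assoc, simp add: m_assoc [symmetric])

lemma conj_act_surj: "g \<in> carrier G \<Longrightarrow> conj_act G g ` carrier G = carrier G"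
proof (intro equalityI subsetI)
  fix y assume g: "g \<in> carrier G" and y: "y \<in> carrier G"
  then have "y = conj_act G g (conj_act G (inv g) y)"
    by (simp add: conj_act_comp)
  then show "y \<in> conj_act G g ` carrier G"
    using g y by blast
qed auto

lemma generate_conj_act_image:
  assumes "S \<subseteq> carrier G" and "g \<in> carrier G" and "generate G S = carrier G"
  shows "generate G (conj_act G g ` S) = carrier G"
proof -
  interpret conj: group_hom G G "conj_act G g"
    using assms(2) conj_act_hom by unfold_locales
  show ?thesis
    using conj.generate_img[OF assms(1)] assms(2,3) conj_act_surj by simp
qed

lemma commutes_with_generators_imp_center:
  assumes S: "S \<subseteq> carrier G" and gen: "generate G S = carrier G" and z: "z \<in> carrier G"
    and comm: "\<And>s. s \<in> S \<Longrightarrow> s \<otimes> z = z \<otimes> s"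
  shows "z \<in> center G"
proof -
  let ?conj = "\<lambda>g. \<lambda>h \<in> carrier G. g \<otimes> h \<otimes> inv g"
  interpret conj: group_action G "carrier G" ?conj
    by (rule action_by_conjugation)
  \<comment> \<open>The centralizer of z is the stabilizer of z under conjugation, hence a subgroup.\<close>
  have "S \<subseteq> stabilizer G ?conj z"
    using S z comm by (auto simp: stabilizer_def inv_solve_right')
  then have "generate G S \<subseteq> stabilizer G ?conj z"
    by (rule generate_subgroup_incl[OF _ conj.stabilizer_subgroup[OF z]])
  then show ?thesis
    using gen z by (auto simp: center_def stabilizer_def inv_solve_right')
qed

lemma conj_act_in_conj_class:
  "C \<in> conj_classes G \<Longrightarrow> x \<in> C \<Longrightarrow> g \<in> carrier G \<Longrightarrow> conj_act G g x \<in> C"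
  unfolding conj_classes_def orbits_def orbit_def by (auto simp: conj_act_comp)

lemma conj_class_subset_carrier: "C \<in> conj_classes G \<Longrightarrow> C \<subseteq> carrier G"
  unfolding conj_classes_def orbits_def orbit_def by auto

lemma class_vector_nth:
  "class_vector G Cs \<Longrightarrow> j < length Cs \<Longrightarrow> Cs ! j \<in> conj_classes G"
  unfolding class_vector_def nontriv_classes_def using nth_mem by blast

lemma gen_tuples_subset_carrier:
  assumes "class_vector G Cs" and "xs \<in> gen_tuples G Cs"
  shows "set xs \<subseteq> carrier G"
proof
  fix x assume "x \<in> set xs"
  then obtain j where "j < length Cs" and "x \<in> Cs ! j"
    using assms(2) by (auto simp: gen_tuples_def in_set_conv_nth)
  then show "x \<in> carrier G"
    using assms(1) class_vector_nth conj_class_subset_carrier by blast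
qed

lemma finite_gen_tuples:
  assumes "finite (carrier G)" and "class_vector G Cs"
  shows "finite (gen_tuples G Cs)"
proof (rule finite_subset)
  show "gen_tuples G Cs \<subseteq> {xs. set xs \<subseteq> carrier G \<and> length xs = length Cs}"
    using gen_tuples_subset_carrier[OF assms(2)] by (auto simp: gen_tuples_def)
qed (rule finite_lists_length_eq[OF assms(1)])

lemma append_in_gen_tuples:
  assumes "class_vector G Bs" and xs: "xs \<in> gen_tuples G As" and ys: "ys \<in> gen_tuples G Bs"
  shows "xs @ ys \<in> gen_tuples G (As @ Bs)"
proof -
  have "set (xs @ ys) \<subseteq> carrier G"
    using xs gen_tuples_subset_carrier[OF assms(1) ys] generate.incl[of _ "set xs" G]
    by (auto simp: gen_tuples_def)
  then have "generate G (set (xs @ ys)) \<subseteq> carrier G"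
    by (rule generate_incl)
  moreover have "generate G (set xs) \<subseteq> generate G (set (xs @ ys))"
    by (rule mono_generate) simp
  ultimately have "generate G (set (xs @ ys)) = carrier G"
    using xs by (auto simp: gen_tuples_def)
  then show ?thesis
    using xs ys by (auto simp: gen_tuples_def nth_append list_prod_def)
qed

lemma sim_conj_one: "set xs \<subseteq> carrier G \<Longrightarrow> sim_conj G \<one> xs = xs"
  by (induction xs) (auto simp: sim_conj_def)

lemma sim_conj_comp:
  "g \<in> carrier G \<Longrightarrow> h \<in> carrier G \<Longrightarrow> set xs \<subseteq> carrier G \<Longrightarrow>
   sim_conj G g (sim_conj G h xs) = sim_conj G (g \<otimes> h) xs"
  by (auto simp: sim_conj_def conj_act_comp)

lemma sim_conj_in_gen_tuples:
  assumes cv: "class_vector G Cs" and xs: "xs \<in> gen_tuples G Cs" and g: "g \<in> carrier G"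
  shows "sim_conj G g xs \<in> gen_tuples G Cs"
proof -
  interpret conj: group_hom G G "conj_act G g"
    using g conj_act_hom by unfold_locales
  have carr: "set xs \<subseteq> carrier G"
    using gen_tuples_subset_carrier[OF cv xs] .
  have "\<forall>j < length Cs. conj_act G g (xs ! j) \<in> Cs ! j"
    using xs g class_vector_nth[OF cv] conj_act_in_conj_class by (auto simp: gen_tuples_def)
  moreover have "generate G (conj_act G g ` set xs) = carrier G"
    using generate_conj_act_image[OF carr g] xs by (simp add: gen_tuples_def)
  moreover have "list_prod G (map (conj_act G g) xs) = \<one>"
    using conj.hom_list_prod[OF carr] xs by (simp add: gen_tuples_def)
  ultimately show ?thesis
    using xs by (simp add: gen_tuples_def sim_conj_def)
qed

lemma inj_on_sim_conj:
  assumes carr: "set xs \<subseteq> carrier G" and gen: "generate G (set xs) = carrier G"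
    and Z: "center G = {\<one>}"
  shows "inj_on (\<lambda>g. sim_conj G g xs) (carrier G)"
proof (rule inj_onI)
  fix g h assume g: "g \<in> carrier G" and h: "h \<in> carrier G"
    and eq: "sim_conj G g xs = sim_conj G h xs"
  have "s \<otimes> (inv h \<otimes> g) = (inv h \<otimes> g) \<otimes> s" if s: "s \<in> set xs" for s
  proof -
    have s_carr: "s \<in> carrier G"
      using s carr by blast
    have "h \<otimes> s \<otimes> inv h = g \<otimes> s \<otimes> inv g"
      using eq s by (simp add: sim_conj_def conj_act_def map_eq_conv)
    then have "s \<otimes> (inv h \<otimes> g) = inv h \<otimes> (g \<otimes> s \<otimes> inv g) \<otimes> g"
      using g h s_carr by (metis (no_types) inv_closed l_inv l_one m_assoc m_closed)
    also have "\<dots> = (inv h \<otimes> g) \<otimes> s"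
      using g h s_carr by (simp add: m_assoc)
    finally show ?thesis .
  qed
  then have "inv h \<otimes> g \<in> center G"
    using commutes_with_generators_imp_center[OF carr gen] g h by simp
  then show "g = h"
    using Z g h by (simp add: inv_solve_left')
qed

lemma card_gen_tuples:
  assumes fin: "finite (carrier G)" and Z: "center G = {\<one>}" and cv: "class_vector G Cs"
  shows "card (gen_tuples G Cs) = l_i G Cs * order G"
  unfolding l_i_def Sigma_i_def
proof (rule card_eq_card_orbits_mult_order)
  fix xs assume xs: "xs \<in> gen_tuples G Cs"
  then have "set xs \<subseteq> carrier G"
    using cv gen_tuples_subset_carrier by blast
  then show "sim_conj G \<one> xs = xs" and "inj_on (\<lambda>g. sim_conj G g xs) (carrier G)"
    using xs Z by (auto simp: sim_conj_one gen_tuples_def intro: inj_on_sim_conj)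
  show "sim_conj G g (sim_conj G h xs) = sim_conj G (g \<otimes> h) xs"
    if "g \<in> carrier G" "h \<in> carrier G" for g h
    using that \<open>set xs \<subseteq> carrier G\<close> by (rule sim_conj_comp)
qed (use sim_conj_in_gen_tuples[OF cv] finite_gen_tuples[OF fin cv] in auto)

lemma l_i_empty: "gen_tuples G Cs = {} \<Longrightarrow> l_i G Cs = 0"
  by (simp add: l_i_def Sigma_i_def orbits_def)

lemma order_mult_l_i_le_l_i_append:
  assumes fin: "finite (carrier G)" and Z: "center G = {\<one>}"
    and cvA: "class_vector G As" and cvB: "class_vector G Bs" and A: "l_i G As \<noteq> 0"
  shows "order G * l_i G Bs \<le> l_i G (As @ Bs)"
proof -
  obtain a where a: "a \<in> gen_tuples G As"
    using A l_i_empty[of As] by auto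
  have "set a \<subseteq> carrier G" and "generate G (set a) = carrier G"
    using a gen_tuples_subset_carrier[OF cvA] by (auto simp: gen_tuples_def)
  then have inj_a: "inj_on (\<lambda>g. sim_conj G g a) (carrier G)"
    using Z by (rule inj_on_sim_conj)
  let ?F = "\<lambda>(g, ys). sim_conj G g a @ ys"
  have "inj_on ?F (carrier G \<times> gen_tuples G Bs)"
  proof (rule inj_onI, clarify)
    fix g ys h zs
    assume g: "g \<in> carrier G" and h: "h \<in> carrier G"
      and eq: "sim_conj G g a @ ys = sim_conj G h a @ zs"
    then have "sim_conj G g a = sim_conj G h a" and "ys = zs"
      by (simp_all add: sim_conj_def)
    then show "g = h \<and> ys = zs"
      using inj_onD[OF inj_a] g h by blast
  qed
  moreover have "?F ` (carrier G \<times> gen_tuples G Bs) \<subseteq> gen_tuples G (As @ Bs)"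
    using append_in_gen_tuples[OF cvB sim_conj_in_gen_tuples[OF cvA a]] by auto
  moreover have "class_vector G (As @ Bs)"
    using cvA cvB by (simp add: class_vector_def)
  ultimately have "card (carrier G \<times> gen_tuples G Bs) \<le> card (gen_tuples G (As @ Bs))"
    using finite_gen_tuples[OF fin] by (intro card_inj_on_le) auto
  then have "order G * (l_i G Bs * order G) \<le> l_i G (As @ Bs) * order G"
    using card_gen_tuples[OF fin Z] cvB \<open>class_vector G (As @ Bs)\<close>
    by (simp add: card_cartesian_product order_def)
  moreover have "0 < order G"
    using fin order_gt_0_iff_finite by blast
  ultimately show ?thesis
    by (simp add: ac_simps)
qed

lemma order_power_le_l_i:
  assumes fin: "finite (carrier G)" and Z: "center G = {\<one>}" and n0: "1 \<le> n0"
    and H: "\<And>Ds. class_vector G Ds \<Longrightarrow> n0 \<le> length Ds \<Longrightarrow> length Ds \<le> 2 * n0 - 1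
      \<Longrightarrow> l_i G Ds \<ge> 1"
  shows "class_vector G Cs \<Longrightarrow> n0 \<le> length Cs \<Longrightarrow>
    order G ^ ((length Cs - n0) div n0) \<le> l_i G Cs"
proof (induction "length Cs" arbitrary: Cs rule: less_induct)
  case less
  show ?case
  proof (cases "length Cs \<le> 2 * n0 - 1")
    case True
    then have "(length Cs - n0) div n0 = 0"
      using n0 by (intro div_less) linarith
    then show ?thesis
      using H[OF less.prems True] by simp
  next
    case False
    define As where "As = take n0 Cs"
    define Bs where "Bs = drop n0 Cs"
    have cvA: "class_vector G As" and cvB: "class_vector G Bs"
      using less.prems(1) unfolding As_def Bs_def class_vector_def
      by (auto dest: in_set_takeD in_set_dropD)
    have lA: "length As = n0" and lB: "length Bs = length Cs - n0"
      using False by (simp_all add: As_def Bs_def)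
    have "length Cs - n0 = (length Bs - n0) + n0"
      using False lB by linarith
    then have "order G ^ ((length Cs - n0) div n0) = order G * order G ^ ((length Bs - n0) div n0)"
      using n0 by (simp add: div_add_self2)
    also have "\<dots> \<le> order G * l_i G Bs"
      using less.hyps[OF _ cvB] lB n0 False by simp
    also have "\<dots> \<le> l_i G (As @ Bs)"
    proof (rule order_mult_l_i_le_l_i_append[OF fin Z cvA cvB])
      show "l_i G As \<noteq> 0"
        using H[OF cvA] lA n0 by fastforce
    qed
    also have "As @ Bs = Cs"
      by (simp add: As_def Bs_def)
    finally show ?thesis .
  qed
qed

lemma finite_nontriv_classes: "finite (carrier G) \<Longrightarrow> finite (nontriv_classes G)"
  unfolding nontriv_classes_def
  by (rule finite_subset[of _ "Pow (carrier G)"]) (auto dest: conj_class_subset_carrier)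

lemma order_ge_2_if_nonempty_class_vector:
  assumes fin: "finite (carrier G)" and cv: "class_vector G Cs" and "Cs \<noteq> []"
  shows "2 \<le> order G"
proof -
  obtain C where C: "C \<in> conj_classes G" "C \<noteq> {\<one>}"
    using cv \<open>Cs \<noteq> []\<close> by (cases Cs) (auto simp: class_vector_def nontriv_classes_def)
  then have "C \<subseteq> carrier G" and "C \<noteq> {}"
    by (auto simp: conj_classes_def orbits_def orbit_def dest: conj_class_subset_carrier)
  then obtain x where "x \<in> carrier G" and "x \<noteq> \<one>"
    using C(2) by blast
  then have "card {\<one>, x} \<le> order G"
    unfolding order_def using fin by (intro card_mono) auto
  then show ?thesis
    using \<open>x \<noteq> \<one>\<close> by simp
qed

lemma length_div_less_l_i:
  assumes fin: "finite (carrier G)" and Z: "center G = {\<one>}" and n0: "1 \<le> n0"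
    and H: "\<And>Ds. class_vector G Ds \<Longrightarrow> n0 \<le> length Ds \<Longrightarrow> length Ds \<le> 2 * n0 - 1
      \<Longrightarrow> l_i G Ds \<ge> 1"
    and cv: "class_vector G Cs" and len: "n0 \<le> length Cs"
  shows "(length Cs - n0) div n0 < l_i G Cs"
proof -
  let ?k = "(length Cs - n0) div n0"
  have "Cs \<noteq> []"
    using n0 len by auto
  have "?k < 2 ^ ?k"
    by (rule less_exp)
  also have "\<dots> \<le> order G ^ ?k"
    using order_ge_2_if_nonempty_class_vector[OF fin cv \<open>Cs \<noteq> []\<close>] by (rule power_mono) simp
  also have "\<dots> \<le> l_i G Cs"
    using order_power_le_l_i[OF fin Z n0 H cv len] .
  finally show ?thesis .
qed

end

lemma filterlim_diff_div_at_top: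
  fixes g :: "'a \<Rightarrow> nat"
  assumes lim: "filterlim g at_top F" and n: "0 < n"
  shows "filterlim (\<lambda>x. (g x - n) div n) at_top F"
  unfolding filterlim_at_top
proof
  fix Z :: nat
  have "eventually (\<lambda>x. n + Z * n \<le> g x) F"
    using lim by (simp add: filterlim_at_top)
  then show "eventually (\<lambda>x. Z \<le> (g x - n) div n) F"
    by (rule eventually_mono) (simp add: n less_eq_div_iff_mult_less_eq)
qed

theorem corollary9:
  fixes G :: "('a, 'b) monoid_scheme" and n0 :: nat
  assumes "group G"
    and "finite (carrier G)"
    and "center G = {\<one>\<^bsub>G\<^esub>}"
    and "n0 \<ge> 3"
    and "\<And>Ds. class_vector G Ds \<Longrightarrow> n0 \<le> length Ds \<Longrightarrow> length Ds \<le> 2 * n0 - 1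
           \<Longrightarrow> l_i G Ds \<ge> 1"
  shows "finite {Cs. class_vector G Cs \<and> l_i G Cs = 0}
         \<and> (\<forall>f :: nat \<Rightarrow> 'a set list. (\<forall>m. class_vector G (f m))
           \<longrightarrow> filterlim (\<lambda>m. length (f m)) at_top sequentially
           \<longrightarrow> filterlim (\<lambda>m. l_i G (f m)) at_top sequentially)"
proof -
  interpret group G by fact
  have n0: "1 \<le> n0"
    using assms(4) by simp
  note bound = length_div_less_l_i[OF assms(2,3) n0 assms(5)]
  have "{Cs. class_vector G Cs \<and> l_i G Cs = 0} \<subseteq> {Cs. set Cs \<subseteq> nontriv_classes G \<and> length Cs \<le> n0}"
    using bound by (force simp: class_vector_def)
  then have "finite {Cs. class_vector G Cs \<and> l_i G Cs = 0}"
    using finite_lists_length_le[OF finite_nontriv_classes[OF assms(2)]] by (rule finite_subset)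
  moreover have "filterlim (\<lambda>m. l_i G (f m)) at_top sequentially"
    if cv: "\<forall>m. class_vector G (f m)" and len: "filterlim (\<lambda>m. length (f m)) at_top sequentially"
    for f :: "nat \<Rightarrow> 'a set list"
  proof (rule filterlim_at_top_mono)
    show "filterlim (\<lambda>m. (length (f m) - n0) div n0) at_top sequentially"
      using len n0 by (intro filterlim_diff_div_at_top) auto
    have "eventually (\<lambda>m. n0 \<le> length (f m)) sequentially"
      using len by (simp add: filterlim_at_top)
    then show "eventually (\<lambda>m. (length (f m) - n0) div n0 \<le> l_i G (f m)) sequentially"
      by (rule eventually_mono) (use bound cv in \<open>simp add: less_imp_le\<close>)
  qed
  ultimately show ?thesis
    by blast
qed

end
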